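(* The Markov spectrum $\mathcal{M}$ of $\mathbb{Q}((1/T))$ equals $$\{M(A): A=(g_i)_{i\in\mathbb{Z}} \text{ a doubly infinite sequence of polynomials } g_i\in\mathbb{Q}[T] \text{ with } \deg g_i\ge1\}.$$
   Context: $\mathbb{Q}((1/T))$ is the field of formal Laurent series in $1/T$ over $\mathbb{Q}$; $\deg$ of a nonzero series is the exponent of its leading term, $\deg0=-\infty$. For polynomials $c_0,c_1,\dots$ with $\deg c_j\ge1$ for $j\ge1$, $[c_0,c_1,\dots]=c_0+1/(c_1+1/(c_2+\cdots))$ converges in $\mathbb{Q}((1/T))$. For a doubly infinite sequence $A=(g_i)_{i\in\mathbb{Z}}$ of polynomials of positive degree, $\lambda_i(A)=[g_i,g_{i+1},\dots]+[0,g_{i-1},g_{i-2},\dots]$ and $M(A)=\sup_{i\in\mathbb{Z}}\deg\lambda_i(A)\in\mathbb{Z}\cup\{\infty\}$. A binary quadratic form is $Q=AX^2+BXY+CY^2$ with $A,B,C\in\mathbb{Q}((1/T))$ not all in $\mathbb{Q}(T)$, discriminant $D=B^2-4AC$; it is indefinite if $D\ne0$ is a square in $\mathbb{Q}((1/T))$. $m(Q)=\inf\{\deg Q(X,Y):X,Y\in\mathbb{Q}[T],(X,Y)\ne(0,0)\}$, and $\mathcal{M}=\{\tfrac{\deg D}{2}-m(Q):Q\text{ indefinite}\}$, with value $+\infty$ when $m(Q)=-\infty$. *)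

theory Defs
  imports "HOL-Computational_Algebra.Polynomial" "HOL-Computational_Algebra.Formal_Laurent_Series"
    "HOL-Library.Extended_Real"
begin

text \<open>We model Q((1/T)) as rat fls (Laurent series in X with finitely many negative powers),
  with X = 1/T, so T corresponds to fls_X_inv.\<close>

definition deg :: "rat fls \<Rightarrow> ereal" where
  "deg f = (if f = 0 then -\<infinity> else ereal (of_int (- fls_subdegree f)))"

definition polyT :: "rat poly \<Rightarrow> rat fls" where
  "polyT p = (\<Sum>i\<le>degree p. fls_const (coeff p i) * fls_X_inv ^ i)"

definition ratfunT :: "rat fls set" where
  "ratfunT = {polyT p / polyT q | p q. q \<noteq> 0}"

primrec cfrac_fin :: "(nat \<Rightarrow> rat fls) \<Rightarrow> nat \<Rightarrow> rat fls" where
  "cfrac_fin c 0 = c 0"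
| "cfrac_fin c (Suc n) = c 0 + inverse (cfrac_fin (\<lambda>k. c (Suc k)) n)"

definition cfrac :: "(nat \<Rightarrow> rat poly) \<Rightarrow> rat fls" where
  "cfrac c = (THE f. \<forall>N::int. eventually
      (\<lambda>n. deg (f - cfrac_fin (\<lambda>k. polyT (c k)) n) < ereal (of_int N)) sequentially)"

definition lambda_seq :: "(int \<Rightarrow> rat poly) \<Rightarrow> int \<Rightarrow> rat fls" where
  "lambda_seq A i = cfrac (\<lambda>k. A (i + int k))
      + cfrac (\<lambda>k. if k = 0 then 0 else A (i - int k))"

definition markovM :: "(int \<Rightarrow> rat poly) \<Rightarrow> ereal" where
  "markovM A = (SUP i. deg (lambda_seq A i))"

definition disc :: "rat fls \<Rightarrow> rat fls \<Rightarrow> rat fls \<Rightarrow> rat fls" where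
  "disc a b c = b^2 - 4 * a * c"

definition is_form :: "rat fls \<Rightarrow> rat fls \<Rightarrow> rat fls \<Rightarrow> bool" where
  "is_form a b c \<longleftrightarrow> \<not> (a \<in> ratfunT \<and> b \<in> ratfunT \<and> c \<in> ratfunT)"

definition indefinite :: "rat fls \<Rightarrow> rat fls \<Rightarrow> rat fls \<Rightarrow> bool" where
  "indefinite a b c \<longleftrightarrow> disc a b c \<noteq> 0 \<and> (\<exists>s. s^2 = disc a b c)"

definition min_form :: "rat fls \<Rightarrow> rat fls \<Rightarrow> rat fls \<Rightarrow> ereal" where
  "min_form a b c = (INF xy \<in> {(x, y). (x, y) \<noteq> (0::rat poly, 0::rat poly)}.
      deg (a * polyT (fst xy)^2 + b * polyT (fst xy) * polyT (snd xy) + c * polyT (snd xy)^2))"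

definition markov_spectrum :: "ereal set" where
  "markov_spectrum = {deg (disc a b c) / 2 - min_form a b c | a b c.
      is_form a b c \<and> indefinite a b c}"

end

theory Submission
  imports Defs
begin

text \<open>Both sets equal \<open>{1, 2, 3, \<dots>} \<union> {\<infinity>}\<close>.
  For a sequence \<open>A\<close> the two continued fractions in \<open>\<lambda>\<^sub>i(A)\<close> differ from \<open>g\<^sub>i\<close> and \<open>0\<close>
  by series of negative degree, so \<open>deg \<lambda>\<^sub>i(A) = deg g\<^sub>i\<close> and \<open>M(A) = sup deg g\<^sub>i\<close>.
  For an indefinite form with \<open>D = s\<^sup>2\<close>, shifting \<open>X\<close> by the polynomial part of \<open>-b/2a\<close> and
  swapping \<open>X\<close> and \<open>Y\<close> reduces the form until some nonzero polynomial pair \<open>(x, y)\<close> has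
  \<open>deg Q(x, y) < deg s = deg D / 2\<close>; as degrees are integers, \<open>deg D / 2 - m(Q)\<close> is a positive
  integer or \<open>\<infinity>\<close>. Conversely, with \<open>P = T\<^sup>2\<^sup>k\<^sup>-\<^sup>1(T + 1)\<close> and \<open>s = \<surd>P\<close> the form
  \<open>s (X\<^sup>2 - P Y\<^sup>2)\<close> has \<open>m = k\<close> and \<open>deg D / 2 = 2k\<close>, while \<open>s X Y\<close> has \<open>m = -\<infinity>\<close>.\<close>

definition vanishes_upto :: "'a::zero fls \<Rightarrow> int \<Rightarrow> bool" where
  "vanishes_upto f N \<longleftrightarrow> (\<forall>j\<le>N. fls_nth f j = 0)"

lemma vanishes_upto_zero [simp]: "vanishes_upto 0 N"
  by (simp add: vanishes_upto_def)

lemma vanishes_upto_add: "vanishes_upto f N \<Longrightarrow> vanishes_upto g N \<Longrightarrow> vanishes_upto (f + g) N"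
  by (simp add: vanishes_upto_def)

lemma vanishes_upto_diff: "vanishes_upto f N \<Longrightarrow> vanishes_upto g N \<Longrightarrow> vanishes_upto (f - g) N"
  by (simp add: vanishes_upto_def)

lemma vanishes_upto_minus_commute: "vanishes_upto (f - g) N \<longleftrightarrow> vanishes_upto (g - f) N"
  by (auto simp: vanishes_upto_def)

lemma vanishes_upto_mono: "vanishes_upto f N \<Longrightarrow> M \<le> N \<Longrightarrow> vanishes_upto f M"
  by (simp add: vanishes_upto_def)

lemma vanishes_upto_iff_subdegree: "f \<noteq> 0 \<Longrightarrow> vanishes_upto f N \<longleftrightarrow> N < fls_subdegree f"
  using fls_subdegree_geI[of f "N + 1"] by (fastforce simp: vanishes_upto_def)

lemma vanishes_uptoI: "(f \<noteq> 0 \<Longrightarrow> N < fls_subdegree f) \<Longrightarrow> vanishes_upto f N"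
  by (cases "f = 0") (auto simp: vanishes_upto_iff_subdegree)

lemma vanishes_upto_mult:
  fixes f g :: "'a::semiring_no_zero_divisors fls"
  shows "vanishes_upto f N \<Longrightarrow> (g \<noteq> 0 \<Longrightarrow> M \<le> fls_subdegree g) \<Longrightarrow> vanishes_upto (f * g) (N + M)"
  by (cases "f = 0 \<or> g = 0") (auto simp: vanishes_upto_iff_subdegree intro!: vanishes_uptoI)

lemma vanishes_upto_all_iff: "(\<forall>N. vanishes_upto f N) \<longleftrightarrow> f = 0"
  by (auto simp: vanishes_upto_def intro: fls_zero_eqI)

lemma fls_subdegree_add_vanishing:
  assumes "f \<noteq> 0" and "vanishes_upto g (fls_subdegree f)"
  shows "f + g \<noteq> 0" and "fls_subdegree (f + g) = fls_subdegree f"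
proof -
  have lead: "fls_nth (f + g) (fls_subdegree f) \<noteq> 0"
    using assms by (simp add: vanishes_upto_def)
  then show "f + g \<noteq> 0" by (rule fls_nonzeroI)
  show "fls_subdegree (f + g) = fls_subdegree f"
    using lead assms(2) by (intro fls_subdegree_eqI) (auto simp: vanishes_upto_def)
qed

lemma deg_less_iff_vanishes_upto: "deg f < ereal (of_int N) \<longleftrightarrow> vanishes_upto f (- N)"
  by (cases "f = 0") (auto simp: deg_def vanishes_upto_iff_subdegree)

lemma deg_int_cases: "deg f = -\<infinity> \<or> (\<exists>z::int. deg f = ereal (of_int z))"
  by (auto simp: deg_def intro!: exI[of _ "- fls_subdegree f"])


lemma polyT_nth: "fls_nth (polyT p) n = (if n \<le> 0 then coeff p (nat (- n)) else 0)"
proof -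
  have "fls_nth (polyT p) n = (\<Sum>i\<le>degree p. if i = nat (- n) \<and> n \<le> 0 then coeff p i else 0)"
    unfolding polyT_def fls_nth_sum by (intro sum.cong) auto
  then show ?thesis
    by (auto simp: coeff_eq_0 sum.delta)
qed

lemma polyT_0 [simp]: "polyT 0 = 0"
  and polyT_add [simp]: "polyT (p + q) = polyT p + polyT q"
  and polyT_diff [simp]: "polyT (p - q) = polyT p - polyT q"
  and polyT_smult: "polyT (smult a p) = fls_const a * polyT p"
  and polyT_const [simp]: "polyT [:a:] = fls_const a"
  by (auto intro!: fls_eqI simp: polyT_nth coeff_pCons split: nat.split)

lemma polyT_1 [simp]: "polyT 1 = 1"
  using polyT_const[of 1] by (simp add: one_pCons)

lemma polyT_pCons: "polyT (pCons a p) = fls_const a + fls_X_inv * polyT p"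
proof (rule fls_eqI)
  fix n :: int
  show "fls_nth (polyT (pCons a p)) n = fls_nth (fls_const a + fls_X_inv * polyT p) n"
  proof (cases "n < 0")
    case True
    then have "nat (- n) = Suc (nat (- n - 1))" by simp
    with True show ?thesis by (simp add: polyT_nth fls_X_inv_times_conv_shift)
  qed (auto simp: polyT_nth fls_X_inv_times_conv_shift)
qed

lemma polyT_mult [simp]: "polyT (p * q) = polyT p * polyT q"
proof (induction p)
  case (pCons a p)
  have "polyT (pCons a p * q) = fls_const a * polyT q + fls_X_inv * polyT (p * q)"
    by (simp add: polyT_smult polyT_pCons[of 0, simplified])
  also have "\<dots> = polyT (pCons a p) * polyT q"
    by (simp add: pCons.IH polyT_pCons algebra_simps)
  finally show ?case .
qed simp

lemma polyT_power [simp]: "polyT (p ^ n) = polyT p ^ n"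
  by (induction n) simp_all

lemma polyT_X: "polyT [:0, 1:] = fls_X_inv"
  by (simp add: polyT_pCons)

lemma fls_subdegree_polyT [simp]: "fls_subdegree (polyT p) = - int (degree p)"
proof (cases "p = 0")
  case False
  then show ?thesis
    by (intro fls_subdegree_eqI) (auto simp: polyT_nth coeff_eq_0)
qed simp

lemma polyT_eq_0_iff [simp]: "polyT p = 0 \<longleftrightarrow> p = 0"
proof
  assume "polyT p = 0"
  then have "fls_nth (polyT p) (- int (degree p)) = 0" by simp
  then show "p = 0" by (simp add: polyT_nth)
qed simp

lemma polyT_eq_iff [simp]: "polyT p = polyT q \<longleftrightarrow> p = q"
  by (metis polyT_diff polyT_eq_0_iff right_minus_eq)

lemma exists_polyT_approx: "\<exists>p. vanishes_upto (f - polyT p) 0"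
proof
  show "vanishes_upto (f - polyT (fls_prpart f + [:fls_nth f 0:])) 0"
    by (auto simp: vanishes_upto_def polyT_nth coeff_pCons split: nat.split)
qed

lemma deg_polyT_add_vanishing:
  assumes "p \<noteq> 0" and "vanishes_upto e 0"
  shows "deg (polyT p + e) = ereal (real (degree p))"
proof -
  have "vanishes_upto e (fls_subdegree (polyT p))"
    using assms(2) by (rule vanishes_upto_mono) simp
  with assms(1) show ?thesis
    using fls_subdegree_add_vanishing[of "polyT p" e] by (simp add: deg_def)
qed

section \<open>Continued fractions and the values \<open>M(A)\<close>\<close>

abbreviation cf_conv :: "(nat \<Rightarrow> rat poly) \<Rightarrow> nat \<Rightarrow> rat fls" where
  "cf_conv c n \<equiv> cfrac_fin (\<lambda>k. polyT (c k)) n"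

lemma cf_conv_subdegree:
  assumes "\<forall>k. 1 \<le> degree (c k)"
  shows "cf_conv c n \<noteq> 0 \<and> fls_subdegree (cf_conv c n) = - int (degree (c 0))"
  using assms
proof (induction n arbitrary: c)
  case 0
  then have "c 0 \<noteq> 0" by (metis degree_0 not_one_le_zero)
  then show ?case by simp
next
  case (Suc n)
  let ?tail = "cf_conv (\<lambda>k. c (Suc k)) n"
  have tail: "?tail \<noteq> 0 \<and> fls_subdegree ?tail = - int (degree (c 1))"
    using Suc.IH[of "\<lambda>k. c (Suc k)"] Suc.prems by simp
  have c0: "c 0 \<noteq> 0" using Suc.prems by (metis degree_0 not_one_le_zero)
  have "vanishes_upto (inverse ?tail) (fls_subdegree (polyT (c 0)))"
    using tail Suc.prems[rule_format, of 0] Suc.prems[rule_format, of 1]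
    by (intro vanishes_uptoI) simp
  then show ?case
    using fls_subdegree_add_vanishing[of "polyT (c 0)" "inverse ?tail"] c0 by simp
qed

lemma cf_conv_minus_head:
  assumes "\<forall>k\<ge>1. 1 \<le> degree (c k)"
  shows "vanishes_upto (cf_conv c n - polyT (c 0)) 0"
proof (cases n)
  case (Suc m)
  have "cf_conv (\<lambda>k. c (Suc k)) m \<noteq> 0 \<and>
      fls_subdegree (cf_conv (\<lambda>k. c (Suc k)) m) = - int (degree (c 1))"
    using cf_conv_subdegree[of "\<lambda>k. c (Suc k)" m] assms by simp
  moreover have "1 \<le> degree (c 1)" using assms by simp
  ultimately show ?thesis
    using Suc by (intro vanishes_uptoI) simp
qed simp

text \<open>All tails have subdegree at most \<open>-1\<close>, so each level of the recursion gains two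
  orders of vanishing.\<close>
lemma cf_conv_cauchy:
  assumes "\<forall>k\<ge>1. 1 \<le> degree (c k)"
  shows "vanishes_upto (cf_conv c n - cf_conv c m) (int (min n m))"
  using assms
proof (induction n arbitrary: c m)
  case 0
  then show ?case
    using cf_conv_minus_head[of c m] by (simp add: vanishes_upto_minus_commute)
next
  case (Suc n)
  show ?case
  proof (cases m)
    case 0
    then show ?thesis using cf_conv_minus_head[of c "Suc n"] Suc.prems by simp
  next
    case (Suc m')
    let ?A = "cf_conv (\<lambda>k. c (Suc k)) n" and ?B = "cf_conv (\<lambda>k. c (Suc k)) m'"
    have tails: "\<forall>k. 1 \<le> degree (c (Suc k))" using Suc.prems by auto
    have A: "?A \<noteq> 0 \<and> fls_subdegree ?A = - int (degree (c 1))"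
      using cf_conv_subdegree[OF tails, of n] by simp
    have B: "?B \<noteq> 0 \<and> fls_subdegree ?B = - int (degree (c 1))"
      using cf_conv_subdegree[OF tails, of m'] by simp
    have "vanishes_upto (?B - ?A) (int (min n m'))"
      using Suc.IH[of "\<lambda>k. c (Suc k)" m'] Suc.prems by (simp add: vanishes_upto_minus_commute)
    then have "vanishes_upto ((?B - ?A) * (inverse ?A * inverse ?B)) (int (min n m') + 2)"
      using A B tails[rule_format, of 0] by (intro vanishes_upto_mult) simp_all
    moreover have "cf_conv c (Suc n) - cf_conv c m = (?B - ?A) * (inverse ?A * inverse ?B)"
      using A B Suc by (simp add: field_simps)
    ultimately show ?thesis
      using Suc by (auto elim: vanishes_upto_mono)
  qed
qed

lemma cf_conv_limit:
  assumes "\<forall>k\<ge>1. 1 \<le> degree (c k)"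
  obtains f where "\<And>n. vanishes_upto (f - cf_conv c n) (int n)"
proof
  define f where "f = Abs_fls (\<lambda>j. fls_nth (cf_conv c (nat j)) j)"
  have f_nth: "fls_nth f j = fls_nth (cf_conv c (nat j)) j" for j
    unfolding f_def
    by (rule nth_Abs_fls_lower_bound[of "- int (degree (c 0))"]) (auto simp: polyT_nth coeff_eq_0)
  fix n
  show "vanishes_upto (f - cf_conv c n) (int n)"
    unfolding vanishes_upto_def
  proof (intro allI impI)
    fix j assume "j \<le> int n"
    then have "vanishes_upto (cf_conv c (nat j) - cf_conv c n) j"
      using cf_conv_cauchy[OF assms, of "nat j" n] by (auto elim: vanishes_upto_mono)
    then show "fls_nth (f - cf_conv c n) j = 0"
      by (simp add: vanishes_upto_def f_nth)
  qed
qed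

lemma cfrac_approx:
  assumes "\<forall>k\<ge>1. 1 \<le> degree (c k)"
  shows "vanishes_upto (cfrac c - cf_conv c n) (int n)"
proof -
  obtain f where f: "\<And>n. vanishes_upto (f - cf_conv c n) (int n)"
    using cf_conv_limit[OF assms] by blast
  have "cfrac c = f"
    unfolding cfrac_def deg_less_iff_vanishes_upto eventually_sequentially
  proof (rule the_equality)
    show "\<forall>N. \<exists>n0. \<forall>n\<ge>n0. vanishes_upto (f - cf_conv c n) (- N)"
      using f by (meson nat_le_iff vanishes_upto_mono le_minus_iff of_nat_le_iff order.trans)
  next
    fix g assume g: "\<forall>N. \<exists>n0. \<forall>n\<ge>n0. vanishes_upto (g - cf_conv c n) (- N)"
    have "vanishes_upto (g - f) M" for M
    proof -
      obtain n0 where n0: "\<forall>n\<ge>n0. vanishes_upto (g - cf_conv c n) M"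
        using g[rule_format, of "- M"] by auto
      define n where "n = max n0 (nat M)"
      have "vanishes_upto (g - cf_conv c n) M"
        using n0 by (simp add: n_def)
      moreover have "vanishes_upto (f - cf_conv c n) M"
        using f[of n] by (rule vanishes_upto_mono) (simp add: n_def)
      ultimately have "vanishes_upto ((g - cf_conv c n) - (f - cf_conv c n)) M"
        by (rule vanishes_upto_diff)
      then show ?thesis by simp
    qed
    then show "g = f"
      using vanishes_upto_all_iff[of "g - f"] by simp
  qed
  with f show ?thesis by simp
qed

lemma cfrac_minus_head:
  assumes "\<forall>k\<ge>1. 1 \<le> degree (c k)"
  shows "vanishes_upto (cfrac c - polyT (c 0)) 0"
  using cfrac_approx[OF assms, of 0] by simp

lemma deg_lambda_seq:
  assumes "\<forall>i. 1 \<le> degree (A i)"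
  shows "deg (lambda_seq A i) = ereal (real (degree (A i)))"
proof -
  let ?fwd = "\<lambda>k. A (i + int k)" and ?bwd = "\<lambda>k::nat. if k = 0 then 0 else A (i - int k)"
  have "vanishes_upto (cfrac ?fwd - polyT (A i)) 0" "vanishes_upto (cfrac ?bwd) 0"
    using cfrac_minus_head[of ?fwd] cfrac_minus_head[of ?bwd] assms by simp_all
  then have "vanishes_upto ((cfrac ?fwd - polyT (A i)) + cfrac ?bwd) 0"
    by (rule vanishes_upto_add)
  moreover have "A i \<noteq> 0" using assms by (metis degree_0 not_one_le_zero)
  ultimately have "deg (polyT (A i) + ((cfrac ?fwd - polyT (A i)) + cfrac ?bwd)) = degree (A i)"
    by (intro deg_polyT_add_vanishing)
  then show ?thesis by (simp add: lambda_seq_def)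
qed

lemma markovM_eq_SUP_degree:
  "\<forall>i. 1 \<le> degree (A i) \<Longrightarrow> markovM A = (SUP i. ereal (real (degree (A i))))"
  by (simp add: markovM_def deg_lambda_seq)

lemma SUP_of_nat_attained_or_infinite:
  fixes f :: "'a \<Rightarrow> nat"
  shows "(SUP j. ereal (real (f j))) = \<infinity> \<or> (\<exists>i. (SUP j. ereal (real (f j))) = ereal (real (f i)))"
proof (cases "finite (range f)")
  case True
  obtain i where i: "f i = Max (range f)"
    using Max_in[OF True] by auto
  have "(SUP j. ereal (real (f j))) = ereal (real (f i))"
  proof (rule antisym)
    show "(SUP j. ereal (real (f j))) \<le> ereal (real (f i))"
      using True by (intro SUP_least) (simp add: i)
    show "ereal (real (f i)) \<le> (SUP j. ereal (real (f j)))"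
      by (rule SUP_upper) simp
  qed
  then show ?thesis by blast
next
  case False
  have "(SUP j. ereal (real (f j))) = \<infinity>"
  proof (rule SUP_PInfty)
    fix n :: nat
    obtain i where "n < f i"
      using False by (metis finite_nat_set_iff_bounded_le not_le rangeE)
    then show "\<exists>i\<in>UNIV. ereal (real n) \<le> ereal (real (f i))"
      by (intro bexI[of _ i]) simp_all
  qed
  then show ?thesis ..
qed

lemma markovM_values:
  "{markovM A | A. \<forall>i. 1 \<le> degree (A i)} = insert \<infinity> {ereal (real k) | k. 1 \<le> k}"
proof (intro equalityI subsetI)
  fix v assume "v \<in> {markovM A | A. \<forall>i. 1 \<le> degree (A i)}"
  then obtain A where A: "\<forall>i. 1 \<le> degree (A i)" and v: "v = markovM A"
    by blast
  then have "v = (SUP i. ereal (real (degree (A i))))"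
    by (simp add: markovM_eq_SUP_degree)
  then consider "v = \<infinity>" | i where "v = ereal (real (degree (A i)))"
    using SUP_of_nat_attained_or_infinite[of "\<lambda>i. degree (A i)"] by auto
  then show "v \<in> insert \<infinity> {ereal (real k) | k. 1 \<le> k}"
    using A by cases blast+
next
  fix v assume "v \<in> insert \<infinity> {ereal (real k) | k. 1 \<le> k}"
  then consider "v = \<infinity>" | k where "1 \<le> k" "v = ereal (real k)" by blast
  then show "v \<in> {markovM A | A. \<forall>i. 1 \<le> degree (A i)}"
  proof cases
    case 1
    let ?A = "\<lambda>i::int. monom (1::rat) (nat \<bar>i\<bar> + 1)"
    have "markovM ?A = (SUP i. ereal (real (nat \<bar>i\<bar> + 1)))"
      using markovM_eq_SUP_degree[of ?A] by (simp add: degree_monom_eq)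
    also have "\<dots> = \<infinity>"
    proof (rule SUP_PInfty)
      fix n :: nat
      show "\<exists>i\<in>UNIV. ereal (real n) \<le> ereal (real (nat \<bar>i\<bar> + 1))"
        by (rule bexI[of _ "int n"]) simp_all
    qed
    finally have "v = markovM ?A" using 1 by simp
    moreover have "\<forall>i. 1 \<le> degree (?A i)" by (simp add: degree_monom_eq)
    ultimately show ?thesis by blast
  next
    case 2
    let ?A = "\<lambda>i::int. monom (1::rat) k"
    have "v = markovM ?A"
      using markovM_eq_SUP_degree[of ?A] 2 by (simp add: degree_monom_eq)
    moreover have "\<forall>i. 1 \<le> degree (?A i)" using 2 by (simp add: degree_monom_eq)
    ultimately show ?thesis by blast
  qed
qed

section \<open>Reduction of indefinite forms\<close>

definition qform :: "'a::comm_ring_1 \<Rightarrow> 'a \<Rightarrow> 'a \<Rightarrow> 'a \<Rightarrow> 'a \<Rightarrow> 'a" where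
  "qform a b c x y = a * x^2 + b * x * y + c * y^2"

lemma qform_shift: "qform a b c (x + p * y) y = qform a (b + 2 * a * p) (qform a b c p 1) x y"
  by (simp add: qform_def algebra_simps power2_eq_square)

lemma qform_swap: "qform a b c x y = qform c b a y x"
  by (simp add: qform_def algebra_simps)

lemma min_form_lower: "(x, y) \<noteq> (0, 0) \<Longrightarrow> min_form a b c \<le> deg (qform a b c (polyT x) (polyT y))"
  unfolding min_form_def qform_def by (rule INF_lower2[of "(x, y)"]) auto

lemma min_form_greatest:
  "(\<And>x y. (x, y) \<noteq> (0, 0) \<Longrightarrow> m \<le> deg (qform a b c (polyT x) (polyT y))) \<Longrightarrow> m \<le> min_form a b c"
  unfolding min_form_def qform_def by (rule INF_greatest) auto

lemma Inf_ereal_ints: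
  fixes X :: "ereal set"
  assumes ints: "\<And>x. x \<in> X \<Longrightarrow> x = -\<infinity> \<or> (\<exists>z::int. x = ereal (of_int z))"
    and "Inf X \<noteq> -\<infinity>" and "Inf X \<noteq> \<infinity>"
  shows "\<exists>z::int. Inf X = ereal (of_int z)"
proof -
  obtain r where r: "Inf X = ereal r"
    using assms(2,3) by (cases "Inf X") auto
  then obtain x where x: "x \<in> X" "x < ereal (r + 1)"
    using Inf_less_iff[of X "ereal (r + 1)"] by auto
  have "Inf X \<le> x" by (rule Inf_lower[OF x(1)])
  then obtain z :: int where z: "x = ereal (of_int z)"
    using ints[OF x(1)] r by auto
  have "ereal (of_int z) \<le> Inf X"
  proof (rule Inf_greatest)
    fix y assume y: "y \<in> X"
    have "Inf X \<le> y" by (rule Inf_lower[OF y])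
    then obtain w :: int where w: "y = ereal (of_int w)" "r \<le> of_int w"
      using ints[OF y] r by auto
    with x(2) z have "z < w + 1" by simp
    with w show "ereal (of_int z) \<le> y" by simp
  qed
  with \<open>Inf X \<le> x\<close> z show ?thesis by auto
qed

lemma min_form_int_cases:
  "min_form a b c = -\<infinity> \<or> min_form a b c = \<infinity> \<or> (\<exists>z::int. min_form a b c = ereal (of_int z))"
  unfolding min_form_def by (metis (no_types, lifting) Inf_ereal_ints deg_int_cases imageE)

lemma exists_polyT_shift:
  assumes "a \<noteq> 0"
  obtains p where "vanishes_upto (b + 2 * a * polyT p) (fls_subdegree a)"
proof -
  obtain p where p: "vanishes_upto (- b / (2 * a) - polyT p) 0"
    using exists_polyT_approx by blast
  have "vanishes_upto ((- b / (2 * a) - polyT p) * (- (2 * a))) (0 + fls_subdegree a)"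
    using p assms by (intro vanishes_upto_mult) simp_all
  moreover have "(- b / (2 * a) - polyT p) * (- (2 * a)) = b + 2 * a * polyT p"
    using assms by (simp add: field_simps)
  ultimately show thesis using that by simp
qed

text \<open>\<open>b\<^sup>2\<close> vanishes beyond the subdegree of \<open>4 a c\<close>, so \<open>s\<^sup>2\<close> and \<open>-4 a c\<close> have the same subdegree
  and leading coefficient.\<close>
lemma square_disc_leading_coeff:
  fixes a b c s :: "'a::field_char_0 fls"
  assumes disc: "b^2 - 4 * a * c = s^2" and a: "a \<noteq> 0" and c: "c \<noteq> 0"
    and b: "vanishes_upto b (fls_subdegree a)"
    and ca: "fls_subdegree c \<le> fls_subdegree a" and as: "fls_subdegree a \<le> fls_subdegree s"
  shows "fls_subdegree a = fls_subdegree s" and "fls_subdegree c = fls_subdegree s"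
    and "fls_nth s (fls_subdegree s) ^ 2 = - 4 * fls_nth a (fls_subdegree s) * fls_nth c (fls_subdegree s)"
proof -
  let ?f = "- (4 * (a * c))"
  have f: "?f \<noteq> 0" "fls_subdegree ?f = fls_subdegree a + fls_subdegree c"
    using a c by simp_all
  have "vanishes_upto (b * b) (fls_subdegree a + (fls_subdegree a + 1))"
    using b by (rule vanishes_upto_mult) (use b in \<open>simp add: vanishes_upto_iff_subdegree\<close>)
  then have b2: "vanishes_upto (b^2) (fls_subdegree ?f)"
    using f(2) ca by (auto simp: power2_eq_square elim: vanishes_upto_mono)
  have s2: "s^2 = ?f + b^2"
    using disc by (simp add: algebra_simps)
  then have "fls_subdegree (s^2) = fls_subdegree a + fls_subdegree c"
    using fls_subdegree_add_vanishing[OF f(1) b2] f(2) by simp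
  moreover have "s \<noteq> 0"
    using fls_subdegree_add_vanishing(1)[OF f(1) b2] s2 by auto
  ultimately show sa: "fls_subdegree a = fls_subdegree s" and sc: "fls_subdegree c = fls_subdegree s"
    using ca as by (simp_all add: fls_subdegree_pow)
  have "fls_nth s (fls_subdegree s) ^ 2 = fls_nth (s^2) (fls_subdegree s + fls_subdegree s)"
    using fls_times_base[of s s] by (simp add: power2_eq_square)
  also have "\<dots> = - 4 * fls_nth a (fls_subdegree s) * fls_nth c (fls_subdegree s)"
    using fls_times_base[of a c] b2 f(2) sa sc by (simp add: s2 vanishes_upto_def)
  finally show "fls_nth s (fls_subdegree s) ^ 2 =
      - 4 * fls_nth a (fls_subdegree s) * fls_nth c (fls_subdegree s)" .
qed

lemma leading_coeff_root:
  fixes a b c s :: "'a::field_char_0 fls"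
  assumes disc: "b^2 - 4 * a * c = s^2" and a: "a \<noteq> 0" and c: "c \<noteq> 0"
    and b: "vanishes_upto b (fls_subdegree a)"
    and ca: "fls_subdegree c \<le> fls_subdegree a" and as: "fls_subdegree a \<le> fls_subdegree s"
  shows "\<exists>t. vanishes_upto (qform a b c (fls_const t) 1) (fls_subdegree s)"
proof -
  define \<sigma> where "\<sigma> = fls_subdegree s"
  have sa: "fls_subdegree a = \<sigma>" and sc: "fls_subdegree c = \<sigma>"
    and lead: "fls_nth s \<sigma> ^ 2 = - 4 * fls_nth a \<sigma> * fls_nth c \<sigma>"
    using square_disc_leading_coeff[OF assms] by (simp_all add: \<sigma>_def)
  have a\<sigma>: "fls_nth a \<sigma> \<noteq> 0"
    using nth_fls_subdegree_nonzero[OF a] sa by simp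
  define t where "t = fls_nth s \<sigma> / (2 * fls_nth a \<sigma>)"
  have "qform a b c (fls_const t) 1 = fls_const (t^2) * a + fls_const t * b + c"
    by (simp add: qform_def fls_const_power algebra_simps)
  moreover have "vanishes_upto (fls_const (t^2) * a + fls_const t * b + c) \<sigma>"
    unfolding vanishes_upto_def
  proof (intro allI impI)
    fix j assume j: "j \<le> \<sigma>"
    have "fls_nth b j = 0"
      using b j sa by (simp add: vanishes_upto_def)
    moreover have "t^2 * fls_nth a \<sigma> + fls_nth c \<sigma> = 0"
      using lead a\<sigma> by (simp add: t_def field_simps power2_eq_square)
    moreover have "fls_nth a j = 0 \<and> fls_nth c j = 0" if "j < \<sigma>"
      using that sa sc by simp
    ultimately show "fls_nth (fls_const (t^2) * a + fls_const t * b + c) j = 0"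
      using j by (cases "j = \<sigma>") simp_all
  qed
  ultimately show ?thesis
    using \<sigma>_def by metis
qed

definition has_small_value :: "rat fls \<Rightarrow> rat fls \<Rightarrow> rat fls \<Rightarrow> int \<Rightarrow> bool" where
  "has_small_value a b c N \<longleftrightarrow>
    (\<exists>x y. (x, y) \<noteq> (0, 0) \<and> vanishes_upto (qform a b c (polyT x) (polyT y)) N)"

lemma has_small_value_if_first_coeff: "vanishes_upto a N \<Longrightarrow> has_small_value a b c N"
  unfolding has_small_value_def by (intro exI[of _ 1] exI[of _ 0]) (simp add: qform_def)

lemma has_small_value_swap: "has_small_value c b a N \<Longrightarrow> has_small_value a b c N"
proof -
  assume "has_small_value c b a N"
  then obtain x y where "(x, y) \<noteq> (0, 0)" "vanishes_upto (qform c b a (polyT x) (polyT y)) N"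
    unfolding has_small_value_def by blast
  then have "(y, x) \<noteq> (0, 0)" "vanishes_upto (qform a b c (polyT y) (polyT x)) N"
    by (auto simp: qform_swap[of a])
  then show ?thesis
    unfolding has_small_value_def by blast
qed

lemma has_small_value_shift:
  assumes "has_small_value a (b + 2 * a * polyT p) (qform a b c (polyT p) 1) N"
  shows "has_small_value a b c N"
proof -
  obtain x y where "(x, y) \<noteq> (0, 0)"
    and "vanishes_upto (qform a (b + 2 * a * polyT p) (qform a b c (polyT p) 1) (polyT x) (polyT y)) N"
    using assms unfolding has_small_value_def by blast
  moreover have "qform a b c (polyT (x + p * y)) (polyT y) =
      qform a (b + 2 * a * polyT p) (qform a b c (polyT p) 1) (polyT x) (polyT y)"
    by (simp add: qform_shift)
  ultimately have "(x + p * y, y) \<noteq> (0, 0)" "vanishes_upto (qform a b c (polyT (x + p * y)) (polyT y)) N"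
    by auto
  then show ?thesis
    unfolding has_small_value_def by blast
qed

text \<open>Induction on how far \<open>fls_subdegree a\<close> lies below that of \<open>s\<close>. After making \<open>b\<close> small by a
  shift, either the new \<open>c\<close> is already small, or swapping \<open>X\<close> and \<open>Y\<close> raises the subdegree of
  the leading coefficient, or \<open>leading_coeff_root\<close> applies.\<close>
lemma has_small_value_below_sqrt_disc:
  assumes "b^2 - 4 * a * c = s^2" and "s \<noteq> 0"
  shows "has_small_value a b c (fls_subdegree s)"
  using assms
proof (induction "nat (fls_subdegree s - fls_subdegree a + 1)" arbitrary: a b c rule: less_induct)
  case less
  let ?\<sigma> = "fls_subdegree s"
  show ?case
  proof (cases "a = 0 \<or> ?\<sigma> < fls_subdegree a")
    case True
    then show ?thesis by (intro has_small_value_if_first_coeff vanishes_uptoI) auto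
  next
    case False
    then have a: "a \<noteq> 0" "fls_subdegree a \<le> ?\<sigma>" by auto
    obtain p where p: "vanishes_upto (b + 2 * a * polyT p) (fls_subdegree a)"
      using exists_polyT_shift[OF a(1)] by blast
    define b' c' where "b' = b + 2 * a * polyT p" and "c' = qform a b c (polyT p) 1"
    have disc': "b'^2 - 4 * a * c' = s^2"
      using less.prems(1) by (simp add: b'_def c'_def qform_def algebra_simps power2_eq_square)
    consider "c' = 0 \<or> ?\<sigma> < fls_subdegree c'"
      | "c' \<noteq> 0" "fls_subdegree a < fls_subdegree c'" "fls_subdegree c' \<le> ?\<sigma>"
      | "c' \<noteq> 0" "fls_subdegree c' \<le> fls_subdegree a"
      by force
    then have "has_small_value a b' c' ?\<sigma>"
    proof cases
      case 1
      then show ?thesis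
        by (intro has_small_value_swap[OF has_small_value_if_first_coeff] vanishes_uptoI) auto
    next
      case 2
      have "b'^2 - 4 * c' * a = s^2"
        using disc' by (simp add: mult.commute mult.left_commute)
      with 2 a less.prems(2) show ?thesis
        by (intro has_small_value_swap[OF less.hyps]) simp_all
    next
      case 3
      obtain t where "vanishes_upto (qform a b' c' (fls_const t) 1) ?\<sigma>"
        using leading_coeff_root[OF disc' a(1) 3(1) p[folded b'_def] 3(2) a(2)] by blast
      then show ?thesis
        unfolding has_small_value_def by (intro exI[of _ "[:t:]"] exI[of _ 1]) simp
    qed
    then show ?thesis
      unfolding b'_def c'_def by (rule has_small_value_shift)
  qed
qed

lemma markov_spectrum_value_cases:
  assumes "indefinite a b c"
  shows "deg (disc a b c) / 2 - min_form a b c \<in> insert \<infinity> {ereal (real k) | k. 1 \<le> k}"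
proof -
  obtain s where s: "s^2 = disc a b c" "s \<noteq> 0"
    using assms by (force simp: indefinite_def)
  define \<sigma> where "\<sigma> = fls_subdegree s"
  have half: "deg (disc a b c) / 2 = ereal (of_int (- \<sigma>))"
    using s(2) by (simp flip: s(1) add: deg_def \<sigma>_def fls_subdegree_pow)
  obtain x y where xy: "(x, y) \<noteq> (0, 0)" "vanishes_upto (qform a b c (polyT x) (polyT y)) \<sigma>"
    using has_small_value_below_sqrt_disc[of b a c s] s by (auto simp: disc_def \<sigma>_def has_small_value_def)
  have "min_form a b c \<le> deg (qform a b c (polyT x) (polyT y))"
    using xy(1) by (rule min_form_lower)
  also have "\<dots> < ereal (of_int (- \<sigma>))"
    using xy(2) by (subst deg_less_iff_vanishes_upto) simp
  finally have below: "min_form a b c < ereal (of_int (- \<sigma>))" .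
  then have "min_form a b c \<noteq> \<infinity>" by auto
  then consider "min_form a b c = -\<infinity>" | z :: int where "min_form a b c = ereal (of_int z)"
    using min_form_int_cases[of a b c] by blast
  then show ?thesis
  proof cases
    case 1
    then show ?thesis using half by simp
  next
    case 2
    then have "deg (disc a b c) / 2 - min_form a b c = ereal (real (nat (- \<sigma> - z)))"
      and "1 \<le> nat (- \<sigma> - z)"
      using half below by simp_all
    then show ?thesis by blast
  qed
qed

section \<open>Forms attaining every value\<close>

definition nonsquare_poly :: "nat \<Rightarrow> rat poly" where
  "nonsquare_poly k = [:0, 1:] ^ (2 * k - 1) * [:1, 1:]"

text \<open>\<open>T\<^sup>k (1 + 1/T)\<^sup>1\<^sup>/\<^sup>2\<close>, expanded by the binomial series in \<open>X = 1/T\<close>; its square is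
  \<open>nonsquare_poly k\<close>.\<close>
definition sqrt_nonsquare :: "nat \<Rightarrow> rat fls" where
  "sqrt_nonsquare k = fls_X_inv ^ k * fps_to_fls (fps_binomial (1/2))"

lemma nonsquare_poly_nonzero [simp]: "nonsquare_poly k \<noteq> 0"
  unfolding nonsquare_poly_def by (intro no_zero_divisors) simp_all

lemma order_0_nonsquare_poly: "order 0 (nonsquare_poly k) = 2 * k - 1"
proof -
  have "order 0 ([:0, 1:] ^ (2 * k - 1) :: rat poly) = 2 * k - 1"
    using order_power_n_n[of "0 :: rat" "2 * k - 1"] by simp
  moreover have "order 0 ([:1, 1:] :: rat poly) = 0"
    by (rule order_0I) simp
  ultimately show ?thesis
    using nonsquare_poly_nonzero[of k] by (simp add: nonsquare_poly_def order_mult del: mult_pCons_right)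
qed

lemma eq_nonsquare_poly_mult_square:
  assumes "1 \<le> k" and "p^2 = nonsquare_poly k * q^2"
  shows "q = 0"
proof (rule ccontr)
  assume q: "q \<noteq> 0"
  then have p: "p \<noteq> 0" using assms(2) by auto
  have "2 * order 0 p = order 0 (p^2)"
    using p by (simp add: power2_eq_square order_mult)
  also have "\<dots> = (2 * k - 1) + 2 * order 0 q"
    unfolding assms(2) using q by (simp add: power2_eq_square order_mult order_0_nonsquare_poly)
  finally show False using assms(1) by presburger
qed

lemma sqrt_nonsquare_square: "1 \<le> k \<Longrightarrow> (sqrt_nonsquare k)^2 = polyT (nonsquare_poly k)"
proof -
  assume k: "1 \<le> k"
  have "(fps_binomial (1/2::rat))^2 = 1 + fps_X"
    using fps_binomial_add_mult[of "1/2 :: rat" "1/2"] by (simp add: power2_eq_square fps_binomial_1)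
  then have "(sqrt_nonsquare k)^2 = (fls_X_inv ^ k)^2 * (1 + fls_X)"
    by (simp add: sqrt_nonsquare_def power_mult_distrib flip: fps_to_fls_power)
  also have "(fls_X_inv ^ k)^2 = (fls_X_inv ^ (2 * k) :: rat fls)"
    by (simp add: power_mult mult.commute)
  also have "\<dots> = fls_X_inv ^ (2 * k - 1) * fls_X_inv"
    using k by (intro power_minus_mult[symmetric]) simp
  also have "fls_X_inv ^ (2 * k - 1) * fls_X_inv * (1 + fls_X) =
      fls_X_inv ^ (2 * k - 1) * (fls_X_inv * (1 + fls_X))"
    by (rule mult.assoc)
  also have "fls_X_inv * (1 + fls_X) = (fls_X_inv + 1 :: rat fls)"
    by (simp add: distrib_left fls_X_inv_times_conv_shift)
  also have "fls_X_inv ^ (2 * k - 1) * (fls_X_inv + 1) = polyT (nonsquare_poly k)"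
    by (simp add: nonsquare_poly_def polyT_X polyT_pCons algebra_simps)
  finally show ?thesis .
qed

lemma sqrt_nonsquare_nonzero [simp]: "sqrt_nonsquare k \<noteq> 0"
  and fls_subdegree_sqrt_nonsquare [simp]: "fls_subdegree (sqrt_nonsquare k) = - int k"
proof -
  have "fps_binomial (1/2::rat) $ 0 = 1" by simp
  then have "fps_binomial (1/2::rat) \<noteq> 0" "subdegree (fps_binomial (1/2::rat)) = 0"
    by (metis fps_zero_nth zero_neq_one, simp)
  then show "sqrt_nonsquare k \<noteq> 0" "fls_subdegree (sqrt_nonsquare k) = - int k"
    by (simp_all add: sqrt_nonsquare_def fls_subdegree_fls_to_fps)
qed

lemma sqrt_nonsquare_not_ratfun: "1 \<le> k \<Longrightarrow> sqrt_nonsquare k \<notin> ratfunT"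
proof
  assume k: "1 \<le> k" and "sqrt_nonsquare k \<in> ratfunT"
  then obtain p q where q: "q \<noteq> 0" and "sqrt_nonsquare k = polyT p / polyT q"
    unfolding ratfunT_def by blast
  then have "(sqrt_nonsquare k)^2 * polyT q ^ 2 = polyT p ^ 2"
    by (simp add: power_mult_distrib[symmetric])
  then have "p^2 = nonsquare_poly k * q^2"
    using sqrt_nonsquare_square[OF k] by (simp flip: polyT_power polyT_mult)
  with k q show False
    using eq_nonsquare_poly_mult_square by blast
qed

lemma min_form_sqrt_nonsquare:
  assumes "1 \<le> k"
  shows "min_form (sqrt_nonsquare k) 0 (- sqrt_nonsquare k * polyT (nonsquare_poly k)) = ereal (real k)"
proof (rule antisym)
  let ?s = "sqrt_nonsquare k" and ?P = "nonsquare_poly k"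
  have "min_form ?s 0 (- ?s * polyT ?P) \<le> deg (qform ?s 0 (- ?s * polyT ?P) (polyT 1) (polyT 0))"
    by (rule min_form_lower) simp
  then show "min_form ?s 0 (- ?s * polyT ?P) \<le> ereal (real k)"
    by (simp add: qform_def deg_def)
  show "ereal (real k) \<le> min_form ?s 0 (- ?s * polyT ?P)"
  proof (rule min_form_greatest)
    fix x y :: "rat poly" assume xy: "(x, y) \<noteq> (0, 0)"
    have "x^2 - ?P * y^2 \<noteq> 0"
      using eq_nonsquare_poly_mult_square[OF assms, of x y] xy by auto
    then have "ereal (real k) \<le> deg (?s * polyT (x^2 - ?P * y^2))"
      by (simp add: deg_def del: polyT_diff polyT_mult polyT_power)
    also have "?s * polyT (x^2 - ?P * y^2) = qform ?s 0 (- ?s * polyT ?P) (polyT x) (polyT y)"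
      by (simp add: qform_def algebra_simps)
    finally show "ereal (real k) \<le> deg (qform ?s 0 (- ?s * polyT ?P) (polyT x) (polyT y))" .
  qed
qed

lemma positive_integer_in_markov_spectrum:
  assumes "1 \<le> k"
  shows "ereal (real k) \<in> markov_spectrum"
proof -
  let ?s = "sqrt_nonsquare k"
  let ?c = "- ?s * polyT (nonsquare_poly k)"
  have D: "disc ?s 0 ?c = (2 * ?s^2)^2"
    using sqrt_nonsquare_square[OF assms] by (simp add: disc_def power2_eq_square algebra_simps)
  then have "indefinite ?s 0 ?c"
    unfolding indefinite_def by (intro conjI exI[of _ "2 * ?s^2"]) simp_all
  moreover have "is_form ?s 0 ?c"
    using sqrt_nonsquare_not_ratfun[OF assms] by (simp add: is_form_def)
  moreover have "deg (disc ?s 0 ?c) = ereal (real (4 * k))"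
    unfolding D by (simp add: deg_def fls_subdegree_pow)
  then have "deg (disc ?s 0 ?c) / 2 - min_form ?s 0 ?c = ereal (real k)"
    using min_form_sqrt_nonsquare[OF assms] by simp
  ultimately show ?thesis
    unfolding markov_spectrum_def by force
qed

lemma infinity_in_markov_spectrum: "\<infinity> \<in> markov_spectrum"
proof -
  let ?s = "sqrt_nonsquare 1"
  have "indefinite 0 ?s 0"
    unfolding indefinite_def disc_def by auto
  moreover have "is_form 0 ?s 0"
    using sqrt_nonsquare_not_ratfun[of 1] by (simp add: is_form_def)
  moreover have "min_form 0 ?s 0 \<le> deg (qform 0 ?s 0 (polyT 1) (polyT 0))"
    by (rule min_form_lower) simp
  then have "min_form 0 ?s 0 = -\<infinity>"
    by (simp add: qform_def deg_def)
  then have "deg (disc 0 ?s 0) / 2 - min_form 0 ?s 0 = \<infinity>"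
    by (simp add: disc_def deg_def)
  ultimately show ?thesis
    unfolding markov_spectrum_def by force
qed

lemma markov_spectrum_eq: "markov_spectrum = insert \<infinity> {ereal (real k) | k. 1 \<le> k}"
proof (intro equalityI subsetI)
  fix v assume "v \<in> markov_spectrum"
  then show "v \<in> insert \<infinity> {ereal (real k) | k. 1 \<le> k}"
    unfolding markov_spectrum_def using markov_spectrum_value_cases by blast
qed (use positive_integer_in_markov_spectrum infinity_in_markov_spectrum in blast)

theorem theorem10:
  shows "markov_spectrum = {markovM A | A. \<forall>i. degree (A i) \<ge> 1}"
  by (simp only: markov_spectrum_eq markovM_values)

end
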